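(* Let $V$ be an irreducible Harish-Chandra $\mathcal G$-module. Suppose there exist a $\mathbb Z$-basis $\{\boldsymbol\alpha_1,\dots,\boldsymbol\alpha_n\}$ of $\mathbb Z^n$ and a nonzero weight vector $v\in V$ such that $\mathcal G_{\boldsymbol\alpha_i}v=0$ for all $i=1,\dots,n$. Then $V$ is a GHW module up to a change of coordinates: i.e., there is $k\in\mathbb N$ such that $\mathcal G_{\mathbf m}v=0$ for all $\mathbf m=\sum_{i}m_i\boldsymbol\alpha_i$ with $m_i\ge k$ for every $i$ (equivalently, after twisting $V$ by the automorphism $T_A$ with $A\boldsymbol\alpha_i$-coordinates sending $\boldsymbol\alpha_i$ to $\mathbf e_i$, $V$ is a GHW module).
   Context: $n\ge 2$. $\mathcal A_n=\mathbb C[t_1^{\pm1},\dots,t_n^{\pm1}]$, $t^{\mathbf m}=t_1^{m_1}\cdots t_n^{m_n}$, $d_j=t_j\frac{\partial}{\partial t_j}$, $(\mathbf u|\mathbf v)=\sum_iu_iv_i$, $D(\mathbf u,\mathbf r)=\sum_iu_it^{\mathbf r}d_i$. $\mathcal D_n=\mathrm{span}\{D(\mathbf u,\mathbf r):(\mathbf u|\mathbf r)=0\}$ with $[D(\mathbf p,\mathbf m),D(\mathbf q,\mathbf k)]=D((\mathbf p|\mathbf k)\mathbf q-(\mathbf q|\mathbf m)\mathbf p,\mathbf m+\mathbf k)$; $\mathcal G=\mathcal D_n\ltimes\mathcal A_n$ with $[D(\mathbf u,\mathbf r),t^{\mathbf m}]=(\mathbf u|\mathbf m)t^{\mathbf r+\mathbf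 m}$, $[t^{\mathbf r},t^{\mathbf m}]=0$. Grading: $\mathcal G_{\mathbf m}=\mathrm{span}\{D(\mathbf u,\mathbf m):(\mathbf u|\mathbf m)=0\}\oplus\mathbb Ct^{\mathbf m}$ ($\mathbf m\ne\mathbf 0$), $\mathcal G_{\mathbf 0}=\mathrm{span}\{d_j\}\oplus\mathbb Ct^{\mathbf 0}$. Harish-Chandra module: weight module for $\mathcal H=\mathrm{span}\{d_j\}$ with finite-dimensional weight spaces. GHW module: there are a nonzero weight vector $v$ and $k\in\mathbb N$ with $\mathcal G_{\mathbf m}v=0$ for all $\mathbf m\ge(k,\dots,k)$ componentwise. For $A\in GL_n(\mathbb Z)$, $T_A$ is the automorphism $D(\mathbf u,\mathbf r)\mapsto D((A^T)^{-1}\mathbf u,A\mathbf r)$, $t^{\mathbf r}\mapsto t^{A\mathbf r}$. *)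

theory Defs
  imports Complex_Main
begin

text \<open>Lattice points of Z^n are functions 'n \<Rightarrow> int, vectors in C^n are 'n \<Rightarrow> complex,
  where 'n is a finite index type with CARD('n) = n.
  A G-module structure on a complex vector space ('v, scal) is given by the action of the
  spanning elements D(u,r) (via rD u r, meaningful for (u|r)=0) and t^r (via rT r).\<close>

definition ip :: "('n::finite \<Rightarrow> complex) \<Rightarrow> ('n \<Rightarrow> int) \<Rightarrow> complex" where
  "ip u r = (\<Sum>i\<in>UNIV. u i * of_int (r i))"

definition unitv :: "'n \<Rightarrow> 'n \<Rightarrow> complex" where
  "unitv j = (\<lambda>i. if i = j then 1 else 0)"

definition G_module ::
  "(complex \<Rightarrow> 'v::ab_group_add \<Rightarrow> 'v) \<Rightarrow> (('n::finite \<Rightarrow> complex) \<Rightarrow> ('n \<Rightarrow> int) \<Rightarrow> 'v \<Rightarrow> 'v)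
    \<Rightarrow> (('n \<Rightarrow> int) \<Rightarrow> 'v \<Rightarrow> 'v) \<Rightarrow> bool" where
  "G_module scal rD rT \<longleftrightarrow>
     vector_space scal \<and>
     (\<forall>u r. ip u r = 0 \<longrightarrow> Vector_Spaces.linear scal scal (rD u r)) \<and>
     (\<forall>r. Vector_Spaces.linear scal scal (rT r)) \<and>
     (\<forall>a b u u' r w. ip u r = 0 \<longrightarrow> ip u' r = 0 \<longrightarrow>
        rD (\<lambda>i. a * u i + b * u' i) r w = scal a (rD u r w) + scal b (rD u' r w)) \<and>
     (\<forall>p m q k w. ip p m = 0 \<longrightarrow> ip q k = 0 \<longrightarrow>
        rD p m (rD q k w) - rD q k (rD p m w)
          = rD (\<lambda>i. ip p k * q i - ip q m * p i) (\<lambda>i. m i + k i) w) \<and>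
     (\<forall>u r m w. ip u r = 0 \<longrightarrow>
        rD u r (rT m w) - rT m (rD u r w) = scal (ip u m) (rT (\<lambda>i. r i + m i) w)) \<and>
     (\<forall>r m w. rT r (rT m w) = rT m (rT r w))"

definition dact :: "(('n::finite \<Rightarrow> complex) \<Rightarrow> ('n \<Rightarrow> int) \<Rightarrow> 'v \<Rightarrow> 'v) \<Rightarrow> 'n \<Rightarrow> 'v \<Rightarrow> 'v" where
  "dact rD j = rD (unitv j) (\<lambda>_. 0)"

definition weight_space ::
  "(complex \<Rightarrow> 'v::ab_group_add \<Rightarrow> 'v) \<Rightarrow> (('n::finite \<Rightarrow> complex) \<Rightarrow> ('n \<Rightarrow> int) \<Rightarrow> 'v \<Rightarrow> 'v)
    \<Rightarrow> ('n \<Rightarrow> complex) \<Rightarrow> 'v set" where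
  "weight_space scal rD lam = {w. \<forall>j. dact rD j w = scal (lam j) w}"

definition weight_vector ::
  "(complex \<Rightarrow> 'v::ab_group_add \<Rightarrow> 'v) \<Rightarrow> (('n::finite \<Rightarrow> complex) \<Rightarrow> ('n \<Rightarrow> int) \<Rightarrow> 'v \<Rightarrow> 'v)
    \<Rightarrow> 'v \<Rightarrow> bool" where
  "weight_vector scal rD w \<longleftrightarrow> (\<exists>lam. w \<in> weight_space scal rD lam)"

definition harish_chandra ::
  "(complex \<Rightarrow> 'v::ab_group_add \<Rightarrow> 'v) \<Rightarrow> (('n::finite \<Rightarrow> complex) \<Rightarrow> ('n \<Rightarrow> int) \<Rightarrow> 'v \<Rightarrow> 'v) \<Rightarrow> bool" where
  "harish_chandra scal rD \<longleftrightarrow>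
     module.span scal (\<Union>lam. weight_space scal rD lam) = UNIV \<and>
     (\<forall>lam. \<exists>B. finite B \<and> weight_space scal rD lam \<subseteq> module.span scal B)"

definition irreducible_G ::
  "(complex \<Rightarrow> 'v::ab_group_add \<Rightarrow> 'v) \<Rightarrow> (('n::finite \<Rightarrow> complex) \<Rightarrow> ('n \<Rightarrow> int) \<Rightarrow> 'v \<Rightarrow> 'v)
    \<Rightarrow> (('n \<Rightarrow> int) \<Rightarrow> 'v \<Rightarrow> 'v) \<Rightarrow> bool" where
  "irreducible_G scal rD rT \<longleftrightarrow>
     (UNIV :: 'v set) \<noteq> {0} \<and>
     (\<forall>W. module.subspace scal W \<longrightarrow>
        (\<forall>u r. ip u r = 0 \<longrightarrow> rD u r ` W \<subseteq> W) \<longrightarrow>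
        (\<forall>r. rT r ` W \<subseteq> W) \<longrightarrow> W = {0} \<or> W = UNIV)"

definition G_ann ::
  "(('n::finite \<Rightarrow> complex) \<Rightarrow> ('n \<Rightarrow> int) \<Rightarrow> 'v::zero \<Rightarrow> 'v)
    \<Rightarrow> (('n \<Rightarrow> int) \<Rightarrow> 'v \<Rightarrow> 'v) \<Rightarrow> ('n \<Rightarrow> int) \<Rightarrow> 'v \<Rightarrow> bool" where
  "G_ann rD rT m w \<longleftrightarrow> (\<forall>u. ip u m = 0 \<longrightarrow> rD u m w = 0) \<and> rT m w = 0"

definition Z_basis :: "('n::finite \<Rightarrow> ('n \<Rightarrow> int)) \<Rightarrow> bool" where
  "Z_basis \<alpha> \<longleftrightarrow> (\<forall>m. \<exists>!c. m = (\<lambda>j. \<Sum>i\<in>UNIV. c i * \<alpha> i j))"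

end

theory Submission
  imports Defs
begin

text \<open>Let \<open>S\<close> be the set of coordinate vectors \<open>c\<close> with \<open>\<G>\<^bsub>\<Sigma> c\<^sub>i \<alpha>\<^sub>i\<^esub> v = 0\<close>.
  If \<open>\<G>\<^sub>a v = \<G>\<^sub>b v = 0\<close> and some \<open>p\<close> has \<open>(p|a) = 0 \<noteq> (p|b)\<close>, then the brackets
  \<open>[D(p,a), t\<^sup>b]\<close> and \<open>[D(p,a), D(q,b)]\<close> already produce all of \<open>\<G>\<^bsub>a+b\<^esub>\<close>, so
  \<open>\<G>\<^bsub>a+b\<^esub> v = 0\<close>. Since the \<open>\<alpha>\<^sub>i\<close> form a basis, such a \<open>p\<close> exists whenever \<open>a\<close> and \<open>b\<close>
  are not proportional. Hence \<open>S\<close> contains the unit vectors and is closed under sums of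
  non-proportional elements, and for \<open>n \<ge> 2\<close> this forces every \<open>c\<close> with all \<open>c\<^sub>i \<ge> 1\<close>
  into \<open>S\<close>; so \<open>k = 1\<close> works.\<close>

lemma ip_scale_left: "ip (\<lambda>i. x * u i) r = x * ip u r"
  by (simp add: ip_def sum_distrib_left mult.assoc)

lemma ip_add_left: "ip (\<lambda>i. u i + u' i) r = ip u r + ip u' r"
  by (simp add: ip_def sum.distrib algebra_simps)

lemma ip_diff_left: "ip (\<lambda>i. u i - u' i) r = ip u r - ip u' r"
  by (simp add: ip_def sum_subtractf algebra_simps)

lemma ip_add_right: "ip u (\<lambda>i. a i + b i) = ip u a + ip u b"
  by (simp add: ip_def sum.distrib algebra_simps)

lemma G_module_rD_zero: "G_module scal rD rT \<Longrightarrow> ip u r = 0 \<Longrightarrow> rD u r 0 = 0"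
  unfolding G_module_def by (meson Vector_Spaces.linear_def module_hom.zero)

lemma G_module_rT_zero: "G_module scal rD rT \<Longrightarrow> rT r 0 = 0"
  unfolding G_module_def by (meson Vector_Spaces.linear_def module_hom.zero)

lemma G_ann_add:
  assumes GM: "G_module scal rD rT"
    and ann_a: "G_ann rD rT a v" and ann_b: "G_ann rD rT b v"
    and p_a: "ip p a = 0" and p_b: "ip p b \<noteq> 0"
  shows "G_ann rD rT (\<lambda>i. a i + b i) v"
proof -
  define p' where "p' = (\<lambda>i. p i / ip p b)"
  have p'_a: "ip p' a = 0" and p'_b: "ip p' b = 1"
    using p_a p_b ip_scale_left[of "1 / ip p b" p] by (simp_all add: p'_def)
  have D_p'_v: "rD p' a v = 0" and T_b_v: "rT b v = 0"
    using ann_a ann_b p'_a by (simp_all add: G_ann_def)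
  have "rD p' a (rT b v) - rT b (rD p' a v) = scal (ip p' b) (rT (\<lambda>i. a i + b i) v)"
    using GM p'_a by (simp add: G_module_def)
  then have "scal 1 (rT (\<lambda>i. a i + b i) v) = 0"
    using D_p'_v T_b_v p'_b G_module_rD_zero[OF GM p'_a] G_module_rT_zero[OF GM] by simp
  then have T_v: "rT (\<lambda>i. a i + b i) v = 0"
    using GM by (simp add: G_module_def vector_space.scale_eq_0_iff)
  have "rD w (\<lambda>i. a i + b i) v = 0" if w: "ip w (\<lambda>i. a i + b i) = 0" for w
  proof -
    \<comment> \<open>\<open>D(w, a+b) = [D(p',a), D(q,b)]\<close> with \<open>q = w + (w|a) p'\<close>, which satisfies \<open>(q|b) = 0\<close>.\<close>
    define q where "q = (\<lambda>i. w i + ip w a * p' i)"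
    have q_b: "ip q b = 0" and q_a: "ip q a = ip w a"
      using w p'_a p'_b by (simp_all add: q_def ip_add_left ip_scale_left ip_add_right add.commute)
    have "rD p' a (rD q b v) - rD q b (rD p' a v)
        = rD (\<lambda>i. ip p' b * q i - ip q a * p' i) (\<lambda>i. a i + b i) v"
      using GM p'_a q_b by (simp add: G_module_def)
    moreover have "(\<lambda>i. ip p' b * q i - ip q a * p' i) = w"
      using p'_b q_a by (simp add: q_def)
    moreover have "rD q b v = 0" using ann_b q_b by (simp add: G_ann_def)
    ultimately show ?thesis
      using D_p'_v G_module_rD_zero[OF GM p'_a] G_module_rD_zero[OF GM q_b] by simp
  qed
  with T_v show ?thesis by (simp add: G_ann_def)
qed

definition basis_comb :: "('n::finite \<Rightarrow> ('n \<Rightarrow> int)) \<Rightarrow> ('n \<Rightarrow> int) \<Rightarrow> ('n \<Rightarrow> int)" where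
  "basis_comb \<alpha> c = (\<lambda>j. \<Sum>i\<in>UNIV. c i * \<alpha> i j)"

lemma basis_comb_unit: "basis_comb \<alpha> (\<lambda>l. if l = i then 1 else 0) = \<alpha> i"
  by (simp add: basis_comb_def fun_eq_iff if_distrib[where f = "\<lambda>x. x * _"] cong: if_cong)

lemma basis_comb_add: "basis_comb \<alpha> (\<lambda>l. c l + d l) = (\<lambda>j. basis_comb \<alpha> c j + basis_comb \<alpha> d j)"
  by (simp add: basis_comb_def fun_eq_iff sum.distrib algebra_simps)

lemma basis_comb_sum_left:
  "basis_comb \<alpha> (\<lambda>l. \<Sum>i\<in>UNIV. x i * c i l) = (\<lambda>j. \<Sum>i\<in>UNIV. x i * basis_comb \<alpha> (c i) j)"
  by (auto simp: basis_comb_def fun_eq_iff sum_distrib_left sum_distrib_right mult.assoc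
      intro: sum.swap)

lemma Z_basis_dual:
  fixes \<alpha> :: "'n::finite \<Rightarrow> 'n \<Rightarrow> int"
  assumes "Z_basis \<alpha>"
  shows "\<exists>P. \<forall>j c. ip (P j) (basis_comb \<alpha> c) = of_int (c j)"
proof -
  have ex1: "\<exists>!c. m = basis_comb \<alpha> c" for m
    using assms unfolding Z_basis_def basis_comb_def by blast
  define coord where "coord m = (THE c. m = basis_comb \<alpha> c)" for m
  have coord_comb: "coord (basis_comb \<alpha> c) = c" for c
    unfolding coord_def by (rule the1_equality[OF ex1]) simp
  have comb_coord: "basis_comb \<alpha> (coord m) = m" for m
    unfolding coord_def using theI'[OF ex1[of m]] by simp
  define e :: "'n \<Rightarrow> 'n \<Rightarrow> int" where "e i = (\<lambda>l. if l = i then 1 else 0)" for i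
  have coord_linear: "coord m = (\<lambda>l. \<Sum>i\<in>UNIV. m i * coord (e i) l)" for m
  proof -
    have "basis_comb \<alpha> (\<lambda>l. \<Sum>i\<in>UNIV. m i * coord (e i) l) = (\<lambda>j. \<Sum>i\<in>UNIV. m i * e i j)"
      by (simp add: basis_comb_sum_left comb_coord)
    also have "\<dots> = m"
      by (simp add: e_def fun_eq_iff if_distrib[where f = "\<lambda>x. _ * x"] cong: if_cong)
    finally show ?thesis using coord_comb by metis
  qed
  have "ip (\<lambda>i. of_int (coord (e i) j)) (basis_comb \<alpha> c) = of_int (c j)" for j c
    using coord_linear[of "basis_comb \<alpha> c"]
    by (simp add: ip_def coord_comb fun_eq_iff mult.commute)
  then show ?thesis by (intro exI[of _ "\<lambda>j i. of_int (coord (e i) j)"]) simp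
qed

lemma G_ann_basis_comb_add:
  assumes "Z_basis \<alpha>" and GM: "G_module scal rD rT"
    and ann_c: "G_ann rD rT (basis_comb \<alpha> c) v" and ann_d: "G_ann rD rT (basis_comb \<alpha> d) v"
    and nonprop: "c i * d k \<noteq> c k * d i"
  shows "G_ann rD rT (basis_comb \<alpha> (\<lambda>l. c l + d l)) v"
proof -
  obtain P where P: "\<And>j c. ip (P j) (basis_comb \<alpha> c) = of_int (c j)"
    using Z_basis_dual[OF \<open>Z_basis \<alpha>\<close>] by blast
  define p where "p = (\<lambda>l. of_int (d k) * P i l - of_int (d i) * P k l)"
  have "ip p (basis_comb \<alpha> d) = 0"
    by (simp add: p_def ip_diff_left ip_scale_left P)
  moreover have "ip p (basis_comb \<alpha> c) = of_int (c i * d k - c k * d i)"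
    by (simp add: p_def ip_diff_left ip_scale_left P algebra_simps)
  then have "ip p (basis_comb \<alpha> c) \<noteq> 0"
    using nonprop by (simp del: of_int_mult of_int_diff)
  ultimately have "G_ann rD rT (\<lambda>j. basis_comb \<alpha> d j + basis_comb \<alpha> c j) v"
    using G_ann_add[OF GM ann_d ann_c] by blast
  then show ?thesis by (simp add: basis_comb_add add.commute)
qed

lemma positive_in_nonproportional_add_closure:
  fixes S :: "('n::finite \<Rightarrow> int) set" and c :: "'n \<Rightarrow> int"
  assumes two: "card (UNIV :: 'n set) \<ge> 2"
    and unit: "\<And>i. (\<lambda>l. if l = i then 1 else 0) \<in> S"
    and add: "\<And>c d i k. c \<in> S \<Longrightarrow> d \<in> S \<Longrightarrow> c i * d k \<noteq> c k * d i \<Longrightarrow> (\<lambda>l. c l + d l) \<in> S"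
    and pos: "\<forall>i. 1 \<le> c i"
  shows "c \<in> S"
proof -
  have indicator: "(\<lambda>l. if l \<in> T then 1 else 0) \<in> S" if "finite T" "T \<noteq> {}" for T
    using that
  proof (induction T rule: finite_ne_induct)
    case (singleton x)
    then show ?case using unit[of x] by simp
  next
    case (insert x F)
    then obtain k where "k \<in> F" by blast
    with insert have "(\<lambda>l. (if l \<in> F then 1 else 0) + (if l = x then 1 else 0)) \<in> S"
      by (intro add[of _ _ k x] unit) auto
    moreover have "(\<lambda>l. (if l \<in> F then 1 else 0) + (if l = x then 1 else 0))
        = (\<lambda>l. if l \<in> insert x F then 1 else (0::int))"
      using insert.hyps by (auto simp: fun_eq_iff)
    ultimately show ?case by simp
  qed
  show ?thesis
    using pos
  proof (induction c rule: measure_induct_rule[where f = "\<lambda>c. \<Sum>i\<in>UNIV. nat (c i)"])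
    case (less c)
    show ?case
    proof (cases "\<forall>i. c i = 1")
      case True
      then show ?thesis using indicator[of UNIV] by (simp add: fun_eq_iff)
    next
      case False
      then obtain j where "c j \<noteq> 1" by blast
      moreover have "1 \<le> c j" using less.prems by blast
      ultimately have j: "c j \<ge> 2" by linarith
      have "card (UNIV - {j}) \<noteq> 0" using two by (simp add: card_Diff_singleton)
      then have "UNIV - {j} \<noteq> {}" by (metis card.empty)
      then obtain k where k: "k \<noteq> j" by blast
      define c' where "c' = c(j := c j - 1)"
      have "(\<Sum>i\<in>UNIV. nat (c' i)) < (\<Sum>i\<in>UNIV. nat (c i))"
        by (rule sum_strict_mono_ex1) (use j in \<open>auto simp: c'_def\<close>)
      moreover have "\<forall>i. 1 \<le> c' i" using less.prems j by (simp add: c'_def)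
      ultimately have "c' \<in> S" using less.IH by blast
      moreover have "c' k \<noteq> 0" using \<open>\<forall>i. 1 \<le> c' i\<close> by (metis not_one_le_zero)
      ultimately have "(\<lambda>l. c' l + (if l = j then 1 else 0)) \<in> S"
        using add[OF _ unit, of c' k j] k by simp
      moreover have "(\<lambda>l. c' l + (if l = j then 1 else 0)) = c"
        by (auto simp: c'_def fun_eq_iff)
      ultimately show ?thesis by simp
    qed
  qed
qed

theorem lemma4p2:
  fixes scal :: "complex \<Rightarrow> 'v::ab_group_add \<Rightarrow> 'v"
    and rD :: "('n::finite \<Rightarrow> complex) \<Rightarrow> ('n \<Rightarrow> int) \<Rightarrow> 'v \<Rightarrow> 'v"
    and rT :: "('n \<Rightarrow> int) \<Rightarrow> 'v \<Rightarrow> 'v"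
    and \<alpha> :: "'n \<Rightarrow> ('n \<Rightarrow> int)"
    and v :: 'v
  assumes "card (UNIV :: 'n set) \<ge> 2"
    and "G_module scal rD rT"
    and "irreducible_G scal rD rT"
    and "harish_chandra scal rD"
    and "Z_basis \<alpha>"
    and "v \<noteq> 0"
    and "weight_vector scal rD v"
    and "\<forall>i. G_ann rD rT (\<alpha> i) v"
  shows "\<exists>k::nat. \<forall>c :: 'n \<Rightarrow> int. (\<forall>i. int k \<le> c i) \<longrightarrow>
           G_ann rD rT (\<lambda>j. \<Sum>i\<in>UNIV. c i * \<alpha> i j) v"
proof -
  let ?S = "{c. G_ann rD rT (basis_comb \<alpha> c) v}"
  have "c \<in> ?S" if "\<forall>i. 1 \<le> c i" for c
  proof (rule positive_in_nonproportional_add_closure[OF assms(1) _ _ that])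
    show "(\<lambda>l. if l = i then 1 else 0) \<in> ?S" for i
      using assms(8) by (simp add: basis_comb_unit)
    show "(\<lambda>l. c l + d l) \<in> ?S" if "c \<in> ?S" "d \<in> ?S" "c i * d k \<noteq> c k * d i" for c d i k
      using G_ann_basis_comb_add[OF assms(5,2)] that by blast
  qed
  then show ?thesis
    by (intro exI[of _ 1]) (simp add: basis_comb_def)
qed

end
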